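(* Let $U,V\in\mathcal S$ and $D\in\mathbb C(z)[\partial]$. Then $D.U\subset V$ if and only if $D.\overline U\subset\overline V$.
   Context: $\mathcal H$ is the space of entire functions with topology of uniform convergence on compacta; $\mathcal S$ is the set of linear subspaces $V\subset\mathbb C[z]$ with $\rho\,\mathbb C[z]\subset V$ for some nonzero polynomial $\rho$; $\overline V$ is the closure in $\mathcal H$. $\partial=d/dz$ and $D.f$ denotes the action of the differential operator $D$ (with rational coefficients) on the function $f$; "$D.\overline U\subset\overline V$" means that for every $f\in\overline U$, $D.f$ (a meromorphic function) lies in $\overline V$. *)

theory Defs
  imports "HOL-Complex_Analysis.Complex_Analysis" "HOL-Computational_Algebra.Polynomial"
begin

definition in_S :: "complex poly set \<Rightarrow> bool" where
  "in_S V \<longleftrightarrow> 0 \<in> V \<and> (\<forall>p\<in>V. \<forall>q\<in>V. p + q \<in> V) \<and> (\<forall>c. \<forall>p\<in>V. smult c p \<in> V)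
     \<and> (\<exists>\<rho>. \<rho> \<noteq> 0 \<and> (\<forall>p. \<rho> * p \<in> V))"

text \<open>Closure of V in the space H of entire functions with the topology of uniform
convergence on compacta (basic neighbourhoods: sup over a compact K below eps).\<close>
definition H_closure :: "complex poly set \<Rightarrow> (complex \<Rightarrow> complex) set" where
  "H_closure V = {f. f holomorphic_on UNIV \<and>
     (\<forall>K. compact K \<longrightarrow> (\<forall>e>0. \<exists>p\<in>V. \<forall>z\<in>K. norm (f z - poly p z) < e))}"

text \<open>A differential operator D = sum_k (n_k/d_k) d^k with rational coefficients is
represented by the list of pairs (n_k, d_k) with d_k nonzero.\<close>
definition valid_op :: "(complex poly \<times> complex poly) list \<Rightarrow> bool" where
  "valid_op D \<longleftrightarrow> (\<forall>c\<in>set D. snd c \<noteq> 0)"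

definition op_poles :: "(complex poly \<times> complex poly) list \<Rightarrow> complex set" where
  "op_poles D = {z. \<exists>c\<in>set D. poly (snd c) z = 0}"

definition op_apply :: "(complex poly \<times> complex poly) list \<Rightarrow> (complex \<Rightarrow> complex) \<Rightarrow> complex \<Rightarrow> complex" where
  "op_apply D f z = (\<Sum>i<length D. (poly (fst (D!i)) z / poly (snd (D!i)) z) * (deriv ^^ i) f z)"

definition op_maps_poly :: "(complex poly \<times> complex poly) list \<Rightarrow> complex poly set \<Rightarrow> complex poly set \<Rightarrow> bool" where
  "op_maps_poly D U V \<longleftrightarrow> (\<forall>p\<in>U. \<exists>q\<in>V. \<forall>z. z \<notin> op_poles D \<longrightarrow> op_apply D (poly p) z = poly q z)"

text \<open>D.closure(U) subset closure(V): the meromorphic function D.f coincides, off the poles,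
with an entire function lying in closure(V).\<close>
definition op_maps_closure :: "(complex poly \<times> complex poly) list \<Rightarrow> complex poly set \<Rightarrow> complex poly set \<Rightarrow> bool" where
  "op_maps_closure D U V \<longleftrightarrow> (\<forall>f\<in>H_closure U. \<exists>g\<in>H_closure V. \<forall>z. z \<notin> op_poles D \<longrightarrow> op_apply D f z = g z)"

end

(*
  A polynomial lying in the closure of V belongs to V.  By induction on rho, peel off one root a
  of rho at a time: subtracting a multiple of an element of V that does not vanish at a reduces to
  the case where all of V vanishes at a; then one divides by z - a, and the maximum modulus
  principle shows that the quotients are still approximated by elements of {q. (z - a) q in V}.

  Write D = L / B with B the common denominator of the coefficients and L an operator with
  polynomial coefficients.  If D.U is contained in V and f in the closure of U is the locally
  uniform limit of p_k in U, then B q_k = L p_k with q_k = D.p_k in V.  By the Cauchy estimates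
  L p_k tends to L f locally uniformly, and since |B| is bounded below on large circles the q_k
  converge locally uniformly to an entire g in the closure of V with B g = L f, i.e. g = D.f.
  Conversely, for p in U the function g = D.p in the closure of V is entire with B g = L p a
  polynomial, so g is a polynomial, which then lies in V by the first part.
*)
theory Submission
  imports Defs "HOL-Computational_Algebra.Fundamental_Theorem_Algebra"
begin

lemma higher_deriv_poly: "(deriv ^^ i) (poly p) = poly ((pderiv ^^ i) p)"
  by (induction i) (auto simp: DERIV_imp_deriv)

lemma continuous_eq_if_eq_off_finite:
  fixes f g :: "'a::{perfect_space,t1_space} \<Rightarrow> 'b::t2_space"
  assumes "continuous_on UNIV f" "continuous_on UNIV g" "finite S" "\<And>z. z \<notin> S \<Longrightarrow> f z = g z"
  shows "f = g"
proof
  fix z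
  have off_S: "\<forall>\<^sub>F w in at z. w \<notin> S"
    using islimpt_finite[OF assms(3)] by (simp add: islimpt_iff_eventually)
  have "(f \<longlongrightarrow> f z) (at z)" "(g \<longlongrightarrow> g z) (at z)"
    using assms(1,2) by (simp_all add: continuous_on_def)
  moreover have "(f \<longlongrightarrow> g z) (at z)"
    by (rule Lim_transform_eventually[OF \<open>(g \<longlongrightarrow> g z) (at z)\<close>])
      (use off_S assms(4) in \<open>auto elim: eventually_mono\<close>)
  ultimately show "f z = g z" by (metis tendsto_unique trivial_limit_at)
qed

lemma entire_norm_le_on_cball:
  fixes f :: "complex \<Rightarrow> complex"
  assumes "f holomorphic_on UNIV" "0 < r" "\<And>w. w \<in> sphere a r \<Longrightarrow> norm (f w) \<le> M" "z \<in> cball a r"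
  shows "norm (f z) \<le> M"
proof (rule maximum_modulus_frontier[of f "cball a r"])
  show "f holomorphic_on interior (cball a r)"
    using assms(1) holomorphic_on_subset by blast
  show "continuous_on (closure (cball a r)) f"
    using assms(1) holomorphic_on_imp_continuous_on continuous_on_subset by blast
qed (use assms in auto)

lemma poly_norm_bounded_below_at_infinity:
  fixes p :: "'a::{comm_semiring_0,real_normed_div_algebra} poly"
  assumes "p \<noteq> 0"
  shows "\<exists>c>0. \<exists>r. \<forall>w. r \<le> norm w \<longrightarrow> c \<le> norm (poly p w)"
proof (cases p)
  case (pCons a q)
  show ?thesis
  proof (cases "q = 0")
    case True
    then show ?thesis using pCons assms by (intro exI[of _ "norm a"]) auto
  next
    case False
    then show ?thesis using pCons poly_infinity[OF False, of 1 a] by (intro exI[of _ 1]) auto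
  qed
qed

lemma bounded_continuous_image_cball:
  fixes f :: "'a::heine_borel \<Rightarrow> 'b::metric_space"
  shows "continuous_on UNIV f \<Longrightarrow> bounded (f ` cball a R)"
  by (meson compact_cball compact_continuous_image compact_imp_bounded continuous_on_subset subset_UNIV)

section \<open>Polynomials in the closure of a subspace\<close>

definition poly_subspace :: "complex poly set \<Rightarrow> bool" where
  "poly_subspace V \<longleftrightarrow> 0 \<in> V \<and> (\<forall>p\<in>V. \<forall>q\<in>V. p + q \<in> V) \<and> (\<forall>c. \<forall>p\<in>V. smult c p \<in> V)"

lemma in_S_iff: "in_S V \<longleftrightarrow> poly_subspace V \<and> (\<exists>\<rho>. \<rho> \<noteq> 0 \<and> (\<forall>p. \<rho> * p \<in> V))"
  by (auto simp: in_S_def poly_subspace_def)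

lemma poly_subspace_diff: "poly_subspace V \<Longrightarrow> p \<in> V \<Longrightarrow> q \<in> V \<Longrightarrow> p - q \<in> V"
  unfolding poly_subspace_def by (metis diff_conv_add_uminus smult_1_left smult_minus_left)

definition poly_approx :: "complex poly set \<Rightarrow> (complex \<Rightarrow> complex) \<Rightarrow> bool" where
  "poly_approx V f \<longleftrightarrow> (\<forall>R e. 0 < e \<longrightarrow> (\<exists>p\<in>V. \<forall>z\<in>cball 0 R. norm (f z - poly p z) < e))"

lemma H_closure_iff: "f \<in> H_closure V \<longleftrightarrow> f holomorphic_on UNIV \<and> poly_approx V f"
proof -
  have "(\<forall>K. compact K \<longrightarrow> P K) \<longleftrightarrow> (\<forall>R. P (cball 0 R))"
    if "\<And>K K'. K \<subseteq> K' \<Longrightarrow> P K' \<Longrightarrow> P K" for P :: "complex set \<Rightarrow> bool"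
  proof
    show "\<forall>R. P (cball 0 R)" if "\<forall>K. compact K \<longrightarrow> P K" using that by simp
  next
    assume "\<forall>R. P (cball 0 R)"
    moreover have "\<exists>R. K \<subseteq> cball 0 R" if "compact K" for K :: "complex set"
      using compact_imp_bounded[OF that] by (auto simp: bounded_pos subset_iff)
    ultimately show "\<forall>K. compact K \<longrightarrow> P K" using that by blast
  qed
  moreover have "\<And>K K'. K \<subseteq> K' \<Longrightarrow> (\<forall>e>0. \<exists>p\<in>V. \<forall>z\<in>K'. norm (f z - poly p z) < e)
      \<Longrightarrow> (\<forall>e>0. \<exists>p\<in>V. \<forall>z\<in>K. norm (f z - poly p z) < e)"
    by (meson subsetD)
  ultimately show ?thesis
    unfolding H_closure_def poly_approx_def by auto
qed

lemma poly_in_H_closure: "p \<in> V \<Longrightarrow> poly p \<in> H_closure V"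
  unfolding H_closure_iff poly_approx_def by (auto intro!: holomorphic_intros bexI[of _ p])

lemma poly_approx_root:
  assumes "poly_approx V f" "\<forall>p\<in>V. poly p a = 0"
  shows "f a = 0"
proof (rule ccontr)
  assume "f a \<noteq> 0"
  then obtain p where "p \<in> V" "\<forall>z\<in>cball 0 (norm a). norm (f z - poly p z) < norm (f a)"
    using assms(1) unfolding poly_approx_def by (meson zero_less_norm_iff)
  moreover have "a \<in> cball 0 (norm a)" by simp
  ultimately show False using assms(2) by fastforce
qed

lemma poly_approx_divide_root:
  assumes "\<forall>p\<in>V. poly p a = 0" "poly_approx V (poly ([:-a, 1:] * h))"
  shows "poly_approx {q. [:-a, 1:] * q \<in> V} (poly h)"
  unfolding poly_approx_def
proof (intro allI impI)
  fix R e :: real assume "0 < e"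
  define r where "r = norm a + \<bar>R\<bar> + 1"
  have "1 \<le> r"
    unfolding r_def by (smt (verit) norm_ge_zero)
  obtain p where "p \<in> V" and p: "\<forall>z\<in>cball 0 (norm a + r). norm (poly ([:-a, 1:] * h) z - poly p z) < e/2"
    using assms(2) \<open>0 < e\<close> unfolding poly_approx_def by (meson half_gt_zero)
  moreover obtain q where q: "p = [:-a, 1:] * q"
    using assms(1) \<open>p \<in> V\<close> poly_eq_0_iff_dvd by blast
  \<comment> \<open>On the circle |w - a| = r \<ge> 1, dividing by w - a does not increase the error.\<close>
  have bound: "norm (poly (h - q) z) \<le> e/2" if "z \<in> cball 0 R" for z
  proof (rule entire_norm_le_on_cball[where f = "poly (h - q)" and a = a and r = r])
    show "z \<in> cball a r"
      using that norm_triangle_ineq4[of a z] unfolding r_def by (auto simp: dist_norm)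
    fix w assume w: "w \<in> sphere a r"
    then have "norm w \<le> norm a + r"
      using norm_triangle_ineq2[of w a] by (auto simp: dist_norm norm_minus_commute)
    moreover have "poly ([:-a, 1:] * h) w - poly p w = (w - a) * poly (h - q) w"
      by (simp add: q algebra_simps)
    ultimately have "norm (w - a) * norm (poly (h - q) w) < e/2"
      using p by (metis mem_cball_0 norm_mult)
    moreover have "norm (w - a) = r"
      using w by (auto simp: dist_norm norm_minus_commute)
    ultimately show "norm (poly (h - q) w) \<le> e/2"
      using \<open>1 \<le> r\<close> by (smt (verit) mult_le_cancel_right1 norm_ge_zero)
  qed (use \<open>1 \<le> r\<close> in \<open>auto intro!: holomorphic_intros\<close>)
  have "\<forall>z\<in>cball 0 R. norm (poly h z - poly q z) < e"
  proof
    fix z :: complex assume "z \<in> cball 0 R"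
    from bound[OF this] \<open>0 < e\<close> show "norm (poly h z - poly q z) < e" by simp
  qed
  moreover have "q \<in> {q. [:-a, 1:] * q \<in> V}"
    using \<open>p \<in> V\<close> q by simp
  ultimately show "\<exists>q\<in>{q. [:-a, 1:] * q \<in> V}. \<forall>z\<in>cball 0 R. norm (poly h z - poly q z) < e"
    by blast
qed

lemma poly_approx_vanishing_part:
  assumes "poly_subspace V" "u \<in> V" "poly u a = 1" "poly_approx V f"
  shows "poly_approx {p\<in>V. poly p a = 0} (\<lambda>z. f z - f a * poly u z)"
  unfolding poly_approx_def
proof (intro allI impI)
  fix R e :: real assume "0 < e"
  have "bounded (poly u ` cball 0 R)"
    by (intro bounded_continuous_image_cball continuous_intros)
  then obtain M where "M > 0" and M: "\<And>z. z \<in> cball 0 R \<Longrightarrow> norm (poly u z) \<le> M"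
    by (auto simp: bounded_pos)
  define \<delta> where "\<delta> = e / 2 / (1 + M)"
  have "\<delta> > 0" using \<open>0 < e\<close> \<open>M > 0\<close> by (simp add: \<delta>_def)
  then obtain p where "p \<in> V" and p: "\<forall>z\<in>cball 0 (\<bar>R\<bar> + norm a). norm (f z - poly p z) < \<delta>"
    using assms(4) unfolding poly_approx_def by blast
  define p0 where "p0 = p - smult (poly p a) u"
  have "p0 \<in> V"
    using assms(1,2) \<open>p \<in> V\<close> unfolding p0_def poly_subspace_def by (blast intro: poly_subspace_diff[OF assms(1)])
  moreover have "poly p0 a = 0"
    using assms(3) by (simp add: p0_def)
  moreover have "norm (f z - f a * poly u z - poly p0 z) < e" if "z \<in> cball 0 R" for z
  proof -
    have "norm (f z - f a * poly u z - poly p0 z)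
        = norm ((f z - poly p z) - (f a - poly p a) * poly u z)"
      by (simp add: p0_def algebra_simps)
    also have "\<dots> \<le> norm (f z - poly p z) + norm (f a - poly p a) * norm (poly u z)"
      by (metis norm_mult norm_triangle_ineq4)
    also have "\<dots> \<le> \<delta> + \<delta> * M"
    proof -
      have "z \<in> cball 0 (\<bar>R\<bar> + norm a)" "a \<in> cball 0 (\<bar>R\<bar> + norm a)"
        using that norm_ge_zero[of a] abs_ge_self[of R] abs_ge_zero[of R]
        unfolding mem_cball_0 by linarith+
      then show ?thesis
        using p M[OF that] \<open>0 < \<delta>\<close> by (intro add_mono mult_mono) (auto simp: less_imp_le)
    qed
    also have "\<dots> = \<delta> * (1 + M)"
      by (simp add: algebra_simps)
    also have "\<dots> = e/2"
      using \<open>M > 0\<close> by (simp add: \<delta>_def field_split_simps)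
    also have "\<dots> < e"
      using \<open>0 < e\<close> by simp
    finally show ?thesis .
  qed
  ultimately show "\<exists>q\<in>{p\<in>V. poly p a = 0}. \<forall>z\<in>cball 0 R. norm (f z - f a * poly u z - poly q z) < e"
    by blast
qed

lemma complex_poly_induct [consumes 1, case_names const linear_factor]:
  fixes p :: "complex poly"
  assumes "p \<noteq> 0"
    and const: "\<And>c. c \<noteq> 0 \<Longrightarrow> Q [:c:]"
    and linear_factor: "\<And>a p. p \<noteq> 0 \<Longrightarrow> Q p \<Longrightarrow> Q ([:-a, 1:] * p)"
  shows "Q p"
  using assms(1)
proof (induction "degree p" arbitrary: p)
  case 0
  then obtain c where "p = [:c:]"
    by (metis degree_eq_zeroE)
  with 0 show ?case
    using const by simp
next
  case (Suc n)
  then obtain a where "poly p a = 0"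
    using constant_degree fundamental_theorem_of_algebra by (metis nat.distinct(1))
  then obtain q where q: "p = [:-a, 1:] * q"
    using poly_eq_0_iff_dvd by blast
  with Suc.prems have "q \<noteq> 0"
    by auto
  moreover have "Suc n = degree [:-a, 1:] + degree q"
    unfolding Suc.hyps(2) q by (rule degree_mult_eq) (use \<open>q \<noteq> 0\<close> in auto)
  then have "degree q = n"
    by simp
  ultimately show ?case
    using Suc.hyps(1) linear_factor q by blast
qed

lemma poly_subspace_vanishing_at: "poly_subspace V \<Longrightarrow> poly_subspace {p\<in>V. poly p a = 0}"
  unfolding poly_subspace_def by auto

lemma poly_subspace_cofactors: "poly_subspace V \<Longrightarrow> poly_subspace {q. r * q \<in> V}"
  unfolding poly_subspace_def by (auto simp: distrib_left)

lemma poly_approx_vanishing_reduction: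
  assumes "poly_subspace V" "poly_approx V (poly h)"
  obtains c u where "u \<in> V" "poly_approx {p\<in>V. poly p a = 0} (poly (h - smult c u))"
proof (cases "\<forall>p\<in>V. poly p a = 0")
  case True
  then have "{p\<in>V. poly p a = 0} = V"
    by blast
  then show ?thesis
    using that[of 0 0] assms unfolding poly_subspace_def by simp
next
  case False
  then obtain u where "u \<in> V" "poly u a \<noteq> 0"
    by blast
  define u1 where "u1 = smult (1 / poly u a) u"
  have u1: "u1 \<in> V" "poly u1 a = 1"
    using assms(1) \<open>u \<in> V\<close> \<open>poly u a \<noteq> 0\<close> unfolding u1_def poly_subspace_def by auto
  have "poly (h - smult (poly h a) u1) = (\<lambda>z. poly h z - poly h a * poly u1 z)"
    by (simp add: fun_eq_iff)
  then show ?thesis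
    using that[where c = "poly h a" and u = u1] u1(1) poly_approx_vanishing_part[OF assms(1) u1 assms(2)]
    by simp
qed

lemma poly_mem_if_poly_approx:
  assumes "poly_subspace V" "\<rho> \<noteq> 0" "\<forall>p. \<rho> * p \<in> V" "poly_approx V (poly h)"
  shows "h \<in> V"
  using assms(2,1,3,4)
proof (induction \<rho> arbitrary: V h rule: complex_poly_induct)
  case (const c)
  then have "h = [:c:] * smult (1 / c) h"
    by simp
  also have "\<dots> \<in> V"
    using const.prems(2) by blast
  finally show ?case .
next
  case (linear_factor a \<rho>)
  define W where "W = {p\<in>V. poly p a = 0}"
  obtain c u where "u \<in> V" and approx: "poly_approx W (poly (h - smult c u))"
    using poly_approx_vanishing_reduction[OF linear_factor.prems(1,3)] unfolding W_def by blast
  have "poly (h - smult c u) a = 0"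
    using approx by (rule poly_approx_root) (simp add: W_def)
  then have "[:-a, 1:] dvd h - smult c u"
    by (simp only: poly_eq_0_iff_dvd)
  then obtain g where g: "h - smult c u = [:-a, 1:] * g"
    by (rule dvdE)
  define W' where "W' = {q. [:-a, 1:] * q \<in> W}"
  have "poly_subspace W'"
    unfolding W'_def W_def by (intro poly_subspace_cofactors poly_subspace_vanishing_at linear_factor.prems)
  moreover have "\<forall>p. \<rho> * p \<in> W'"
  proof
    fix p
    have "[:-a, 1:] * \<rho> * p \<in> V" "poly ([:-a, 1:] * \<rho> * p) a = 0"
      using linear_factor.prems(2) by simp_all
    then show "\<rho> * p \<in> W'"
      by (simp only: W'_def W_def mem_Collect_eq mult.assoc)
  qed
  moreover have "poly_approx W' (poly g)"
    unfolding W'_def by (rule poly_approx_divide_root[OF _ approx[unfolded g]]) (simp add: W_def)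
  ultimately have "g \<in> W'"
    by (rule linear_factor.IH)
  then have "h - smult c u \<in> V"
    by (simp add: W'_def W_def g)
  moreover have "smult c u \<in> V"
    using linear_factor.prems(1) \<open>u \<in> V\<close> unfolding poly_subspace_def by blast
  ultimately have "h - smult c u + smult c u \<in> V"
    using linear_factor.prems(1) unfolding poly_subspace_def by blast
  then show ?case
    by simp
qed

lemma poly_in_H_closure_iff:
  assumes "in_S V"
  shows "poly h \<in> H_closure V \<longleftrightarrow> h \<in> V"
  using assms poly_in_H_closure poly_mem_if_poly_approx by (auto simp: in_S_iff H_closure_iff)

section \<open>Locally uniform limits\<close>

definition locally_uniform_limit :: "(nat \<Rightarrow> complex \<Rightarrow> complex) \<Rightarrow> (complex \<Rightarrow> complex) \<Rightarrow> bool" where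
  "locally_uniform_limit f g \<longleftrightarrow> (\<forall>R. uniform_limit (cball 0 R) f g sequentially)"

lemma poly_approx_iff_limit:
  "poly_approx V f \<longleftrightarrow> (\<exists>p. (\<forall>k. p k \<in> V) \<and> locally_uniform_limit (\<lambda>k. poly (p k)) f)"
proof
  assume "poly_approx V f"
  then have "\<forall>k. \<exists>p\<in>V. \<forall>z\<in>cball 0 (real k). norm (f z - poly p z) < 1 / Suc k"
    unfolding poly_approx_def by simp
  then obtain p where p: "\<And>k. p k \<in> V"
    and approx: "\<And>k z. z \<in> cball 0 (real k) \<Longrightarrow> norm (f z - poly (p k) z) < 1 / Suc k"
    by metis
  have "locally_uniform_limit (\<lambda>k. poly (p k)) f"
    unfolding locally_uniform_limit_def uniform_limit_sequentially_iff
  proof (intro allI impI)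
    fix R e :: real assume "0 < e"
    obtain N :: nat where N: "max R (1 / e) < N"
      using reals_Archimedean2 by blast
    have "dist (poly (p n) z) (f z) < e" if "N \<le> n" "z \<in> cball 0 R" for n z
    proof -
      have "z \<in> cball 0 (real n)" "1 / e < Suc n"
        using that N by auto
      then have "1 / Suc n < e"
        using \<open>0 < e\<close> by (simp add: field_simps)
      then show ?thesis
        using approx[of z n] \<open>z \<in> cball 0 (real n)\<close> by (simp add: dist_norm norm_minus_commute)
    qed
    then show "\<exists>N. \<forall>n\<ge>N. \<forall>z\<in>cball 0 R. dist (poly (p n) z) (f z) < e"
      by blast
  qed
  with p show "\<exists>p. (\<forall>k. p k \<in> V) \<and> locally_uniform_limit (\<lambda>k. poly (p k)) f"
    by blast
next
  assume "\<exists>p. (\<forall>k. p k \<in> V) \<and> locally_uniform_limit (\<lambda>k. poly (p k)) f"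
  then obtain p where "\<And>k. p k \<in> V" "locally_uniform_limit (\<lambda>k. poly (p k)) f"
    by blast
  then show "poly_approx V f"
    unfolding poly_approx_def locally_uniform_limit_def uniform_limit_sequentially_iff
    by (metis dist_norm norm_minus_commute order_refl)
qed

lemma locally_uniform_limit_holomorphic:
  assumes "\<And>k. f k holomorphic_on UNIV" "locally_uniform_limit f g"
  shows "g holomorphic_on UNIV"
proof -
  have "g holomorphic_on ball z 1" for z
  proof (rule holomorphic_uniform_limit[of z 1 f sequentially g])
    have "cball z 1 \<subseteq> cball 0 (norm z + 1)"
      by (simp add: cball_subset_cball_iff)
    then show "uniform_limit (cball z 1) f g sequentially"
      using assms(2) uniform_limit_on_subset unfolding locally_uniform_limit_def by blast
    show "\<forall>\<^sub>F k in sequentially. continuous_on (cball z 1) (f k) \<and> f k holomorphic_on ball z 1"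
      using assms(1) by (intro always_eventually allI conjI)
        (auto intro: holomorphic_on_subset continuous_on_subset holomorphic_on_imp_continuous_on)
  qed auto
  then show ?thesis
    by (meson centre_in_ball holomorphic_on_def field_differentiable_at_within
        holomorphic_on_imp_differentiable_at open_ball zero_less_one)
qed

lemma higher_deriv_diff_bound:
  fixes f h :: "complex \<Rightarrow> complex"
  assumes "f holomorphic_on UNIV" "h holomorphic_on UNIV" "0 < r" "\<forall>w\<in>ball z r. norm (f w - h w) < \<delta>"
  shows "norm ((deriv ^^ i) f z - (deriv ^^ i) h z) \<le> fact i * \<delta> / r ^ i"
proof (cases "i = 0")
  case True
  then show ?thesis
    using assms(3,4) by (simp add: less_imp_le)
next
  case False
  have "(deriv ^^ i) f z - (deriv ^^ i) h z = (deriv ^^ i) (\<lambda>w. f w - h w) z"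
    by (rule higher_deriv_diff[symmetric]) (use assms in auto)
  also have "norm \<dots> \<le> fact i * \<delta> / r ^ i"
  proof (rule Cauchy_higher_deriv_bound[where y = 0])
    show "(\<lambda>w. f w - h w) holomorphic_on ball z r"
      using assms(1,2) by (auto intro!: holomorphic_intros intro: holomorphic_on_subset)
    show "continuous_on (cball z r) (\<lambda>w. f w - h w)"
      using assms(1,2) holomorphic_on_imp_continuous_on
      by (auto intro!: continuous_intros intro: continuous_on_subset)
    show "\<And>w. w \<in> ball z r \<Longrightarrow> f w - h w \<in> ball 0 \<delta>"
      using assms(4) by simp
  qed (use False assms(3) in auto)
  finally show ?thesis .
qed

lemma locally_uniform_limit_higher_deriv:
  assumes "\<And>k. f k holomorphic_on UNIV" "locally_uniform_limit f g"
  shows "locally_uniform_limit (\<lambda>k. (deriv ^^ i) (f k)) ((deriv ^^ i) g)"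
  unfolding locally_uniform_limit_def uniform_limit_sequentially_iff
proof (intro allI impI)
  fix R e :: real assume "0 < e"
  have "g holomorphic_on UNIV"
    using assms by (rule locally_uniform_limit_holomorphic)
  define \<delta> where "\<delta> = e / 2 / fact i"
  have "\<delta> > 0"
    using \<open>0 < e\<close> by (simp add: \<delta>_def)
  then obtain N where N: "\<forall>n\<ge>N. \<forall>w\<in>cball 0 (R + 1). dist (f n w) (g w) < \<delta>"
    using assms(2) unfolding locally_uniform_limit_def uniform_limit_sequentially_iff by blast
  have "norm ((deriv ^^ i) (f n) z - (deriv ^^ i) g z) \<le> fact i * \<delta> / 1 ^ i" if "N \<le> n" "z \<in> cball 0 R" for n z
  proof (rule higher_deriv_diff_bound)
    have "cball z 1 \<subseteq> cball 0 (R + 1)"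
      using that(2) by (simp add: cball_subset_cball_iff)
    then have "ball z 1 \<subseteq> cball 0 (R + 1)"
      using ball_subset_cball by blast
    then show "\<forall>w\<in>ball z 1. norm (f n w - g w) < \<delta>"
      using N that(1) by (auto simp: dist_norm)
  qed (use assms(1) \<open>g holomorphic_on UNIV\<close> in auto)
  moreover have "fact i * \<delta> / 1 ^ i < e"
    using \<open>0 < e\<close> by (simp add: \<delta>_def)
  ultimately show "\<exists>N. \<forall>n\<ge>N. \<forall>z\<in>cball 0 R. dist ((deriv ^^ i) (f n) z) ((deriv ^^ i) g z) < e"
    by (fastforce simp: dist_norm)
qed

lemma uniform_limit_sum:
  fixes f :: "'i \<Rightarrow> 'n \<Rightarrow> 'a \<Rightarrow> 'b::real_normed_vector"
  assumes "finite I" "\<And>i. i \<in> I \<Longrightarrow> uniform_limit S (f i) (g i) F"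
  shows "uniform_limit S (\<lambda>n x. \<Sum>i\<in>I. f i n x) (\<lambda>x. \<Sum>i\<in>I. g i x) F"
  using assms by (induction I rule: finite_induct)
    (auto intro!: uniform_limit_add uniform_limit_const[where c = "\<lambda>x. 0"])

lemma uniformly_Cauchy_on_cball_if_poly_times:
  fixes q :: "nat \<Rightarrow> complex \<Rightarrow> complex"
  assumes "B \<noteq> 0" "\<And>k. q k holomorphic_on UNIV"
    and "\<And>R. uniformly_Cauchy_on (cball 0 R) (\<lambda>k z. poly B z * q k z)"
  shows "uniformly_Cauchy_on (cball 0 R) q"
proof (rule uniformly_Cauchy_onI)
  fix e :: real assume "0 < e"
  obtain c r0 where "c > 0" and c: "\<And>w. r0 \<le> norm w \<Longrightarrow> c \<le> norm (poly B w)"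
    using poly_norm_bounded_below_at_infinity[OF assms(1)] by blast
  define r where "r = max 1 (max R r0)"
  have "c * e / 2 > 0"
    using \<open>c > 0\<close> \<open>0 < e\<close> by simp
  then obtain N where N: "\<forall>w\<in>cball 0 r. \<forall>m\<ge>N. \<forall>k\<ge>N. dist (poly B w * q m w) (poly B w * q k w) < c * e / 2"
    using assms(3) unfolding uniformly_Cauchy_on_def by blast
  \<comment> \<open>On the circle of radius r we have |B| \<ge> c, so the Cauchy bound for B q transfers to q.\<close>
  have "norm (q m z - q k z) \<le> e / 2" if "m \<ge> N" "k \<ge> N" "z \<in> cball 0 R" for m k z
  proof (rule entire_norm_le_on_cball[where f = "\<lambda>z. q m z - q k z" and a = 0 and r = r])
    fix w :: complex assume w: "w \<in> sphere 0 r"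
    then have "c * norm (q m w - q k w) \<le> norm (poly B w) * norm (q m w - q k w)"
      using c by (intro mult_right_mono) (auto simp: r_def)
    also have "\<dots> < c * e / 2"
      using N that(1,2) w by (auto simp: dist_norm norm_mult right_diff_distrib[symmetric])
    finally show "norm (q m w - q k w) \<le> e / 2"
      using \<open>c > 0\<close> by (simp add: field_simps)
  qed (use that assms(2) in \<open>auto intro!: holomorphic_intros simp: r_def\<close>)
  then show "\<exists>M. \<forall>z\<in>cball 0 R. \<forall>m\<ge>M. \<forall>k\<ge>M. dist (q m z) (q k z) < e"
    using \<open>0 < e\<close> by (fastforce simp: dist_norm)
qed

lemma locally_uniform_limit_divide_poly:
  fixes q :: "nat \<Rightarrow> complex \<Rightarrow> complex"
  assumes "B \<noteq> 0" "\<And>k. q k holomorphic_on UNIV"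
    and "locally_uniform_limit (\<lambda>k z. poly B z * q k z) F"
  obtains g where "locally_uniform_limit q g" "\<And>z. poly B z * g z = F z"
proof
  define g where "g z = lim (\<lambda>k. q k z)" for z
  have "uniformly_Cauchy_on (cball 0 R) (\<lambda>k z. poly B z * q k z)" for R
    using assms(3) unfolding locally_uniform_limit_def
    by (blast intro: uniformly_convergent_Cauchy uniformly_convergentI)
  then have "uniformly_Cauchy_on (cball 0 R) q" for R
    by (rule uniformly_Cauchy_on_cball_if_poly_times[OF assms(1,2)])
  then show lim: "locally_uniform_limit q g"
    unfolding locally_uniform_limit_def g_def
    using Cauchy_uniformly_convergent uniformly_convergent_uniform_limit_iff by blast
  show "poly B z * g z = F z" for z
  proof (rule LIMSEQ_unique)
    have "(\<lambda>k. q k z) \<longlonglongrightarrow> g z"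
      using lim unfolding locally_uniform_limit_def
      by (rule allE[of _ "norm z"]) (auto intro: tendsto_uniform_limitI)
    then show "(\<lambda>k. poly B z * q k z) \<longlonglongrightarrow> poly B z * g z"
      by (intro tendsto_intros)
    show "(\<lambda>k. poly B z * q k z) \<longlonglongrightarrow> F z"
      using assms(3) unfolding locally_uniform_limit_def
      by (rule allE[of _ "norm z"]) (auto intro: tendsto_uniform_limitI)
  qed
qed

section \<open>Clearing the denominators of the operator\<close>

definition op_denom :: "(complex poly \<times> complex poly) list \<Rightarrow> complex poly" where
  "op_denom D = (\<Prod>i<length D. snd (D ! i))"

definition cleared_coeff :: "(complex poly \<times> complex poly) list \<Rightarrow> nat \<Rightarrow> complex poly" where
  "cleared_coeff D i = fst (D ! i) * (\<Prod>j\<in>{..<length D} - {i}. snd (D ! j))"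

definition cleared_apply :: "(complex poly \<times> complex poly) list \<Rightarrow> (complex \<Rightarrow> complex) \<Rightarrow> complex \<Rightarrow> complex" where
  "cleared_apply D f z = (\<Sum>i<length D. poly (cleared_coeff D i) z * (deriv ^^ i) f z)"

lemma poly_op_denom_eq_0_iff: "poly (op_denom D) z = 0 \<longleftrightarrow> z \<in> op_poles D"
  unfolding op_denom_def op_poles_def poly_prod
  by (auto simp: in_set_conv_nth) (metis nth_mem lessThan_iff snd_conv)+

lemma op_denom_nonzero: "valid_op D \<Longrightarrow> op_denom D \<noteq> 0"
  unfolding valid_op_def op_denom_def by (auto simp: prod_zero_iff)

lemma finite_op_poles: "valid_op D \<Longrightarrow> finite (op_poles D)"
  using poly_roots_finite[OF op_denom_nonzero] by (simp add: poly_op_denom_eq_0_iff)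

lemma op_denom_times_op_apply:
  assumes "z \<notin> op_poles D"
  shows "poly (op_denom D) z * op_apply D f z = cleared_apply D f z"
  unfolding op_apply_def cleared_apply_def sum_distrib_left
proof (rule sum.cong[OF refl])
  fix i assume "i \<in> {..<length D}"
  then have "poly (op_denom D) z = poly (snd (D ! i)) z * (\<Prod>j\<in>{..<length D} - {i}. poly (snd (D ! j)) z)"
    unfolding op_denom_def poly_prod by (simp add: prod.remove)
  moreover have "poly (snd (D ! i)) z \<noteq> 0"
    using assms \<open>i \<in> {..<length D}\<close> nth_mem unfolding op_poles_def by fastforce
  ultimately show "poly (op_denom D) z * (poly (fst (D ! i)) z / poly (snd (D ! i)) z * (deriv ^^ i) f z)
      = poly (cleared_coeff D i) z * (deriv ^^ i) f z"
    by (simp add: cleared_coeff_def poly_prod)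
qed

lemma continuous_quotient_of_polys_is_poly:
  fixes g :: "complex \<Rightarrow> complex"
  assumes "continuous_on UNIV g" "B \<noteq> 0" "\<And>z. poly B z * g z = poly P z"
  shows "\<exists>Q. g = poly Q"
  using assms(2,3)
proof (induction B arbitrary: P rule: complex_poly_induct)
  case (const c)
  then have "g = poly (smult (1 / c) P)"
    by (auto simp: fun_eq_iff field_simps)
  then show ?case by blast
next
  case (linear_factor a B)
  have "poly P a = 0"
    using linear_factor.prems[of a] by simp
  then obtain P' where P': "P = [:-a, 1:] * P'"
    using poly_eq_0_iff_dvd by blast
  have "(\<lambda>z. poly B z * g z) = poly P'"
  proof (rule continuous_eq_if_eq_off_finite)
    show "continuous_on UNIV (\<lambda>z. poly B z * g z)"
      using assms(1) by (intro continuous_intros)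
    show "poly B z * g z = poly P' z" if "z \<notin> {a}" for z
    proof -
      have "(z - a) * (poly B z * g z) = (z - a) * poly P' z"
        using linear_factor.prems[of z] by (simp add: P' algebra_simps)
      then show ?thesis
        using that by simp
    qed
  qed (auto intro: continuous_intros)
  then show ?case
    using linear_factor.IH by metis
qed

lemma cleared_apply_poly:
  "cleared_apply D (poly p) = poly (\<Sum>i<length D. cleared_coeff D i * (pderiv ^^ i) p)"
  by (simp add: fun_eq_iff cleared_apply_def higher_deriv_poly poly_sum)

lemma op_denom_times_eq_cleared_apply_poly:
  assumes "valid_op D" "continuous_on UNIV g" "\<And>z. z \<notin> op_poles D \<Longrightarrow> op_apply D (poly p) z = g z"
  shows "(\<lambda>z. poly (op_denom D) z * g z) = cleared_apply D (poly p)"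
proof (rule continuous_eq_if_eq_off_finite[OF _ _ finite_op_poles[OF assms(1)]])
  show "continuous_on UNIV (\<lambda>z. poly (op_denom D) z * g z)"
    using assms(2) by (intro continuous_intros)
  show "continuous_on UNIV (cleared_apply D (poly p))"
    unfolding cleared_apply_poly by (intro continuous_intros)
  show "poly (op_denom D) z * g z = cleared_apply D (poly p) z" if "z \<notin> op_poles D" for z
    using op_denom_times_op_apply[OF that, of "poly p"] assms(3)[OF that] by simp
qed

lemma locally_uniform_limit_cleared_apply:
  assumes "\<And>k. f k holomorphic_on UNIV" "locally_uniform_limit f g"
  shows "locally_uniform_limit (\<lambda>k. cleared_apply D (f k)) (cleared_apply D g)"
  unfolding locally_uniform_limit_def cleared_apply_def
proof (intro allI uniform_limit_sum)
  fix R :: real and i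
  have "(deriv ^^ i) g holomorphic_on UNIV"
    using locally_uniform_limit_holomorphic[OF assms] by (simp add: holomorphic_higher_deriv)
  then show "uniform_limit (cball 0 R) (\<lambda>k z. poly (cleared_coeff D i) z * (deriv ^^ i) (f k) z)
      (\<lambda>z. poly (cleared_coeff D i) z * (deriv ^^ i) g z) sequentially"
    using locally_uniform_limit_higher_deriv[OF assms, of i] unfolding locally_uniform_limit_def
    by (intro uniform_lim_mult uniform_limit_const bounded_continuous_image_cball)
      (auto intro: continuous_intros holomorphic_on_imp_continuous_on)
qed simp

lemma op_maps_closure_if_op_maps_poly:
  assumes "valid_op D" "op_maps_poly D U V"
  shows "op_maps_closure D U V"
  unfolding op_maps_closure_def
proof
  fix f assume "f \<in> H_closure U"
  then obtain p where p: "\<And>k. p k \<in> U" and lim_p: "locally_uniform_limit (\<lambda>k. poly (p k)) f"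
    by (auto simp: H_closure_iff poly_approx_iff_limit)
  have "\<forall>k. \<exists>q. q \<in> V \<and> (\<forall>z. z \<notin> op_poles D \<longrightarrow> op_apply D (poly (p k)) z = poly q z)"
    using assms(2) p unfolding op_maps_poly_def by blast
  then obtain q where q: "\<And>k. q k \<in> V"
    and Dp: "\<And>k z. z \<notin> op_poles D \<Longrightarrow> op_apply D (poly (p k)) z = poly (q k) z"
    by (auto dest!: choice)
  have poly_holomorphic: "poly r holomorphic_on UNIV" for r :: "complex poly"
    by (intro holomorphic_intros)
  have "(\<lambda>z. poly (op_denom D) z * poly (q k) z) = cleared_apply D (poly (p k))" for k
    using assms(1) _ Dp by (rule op_denom_times_eq_cleared_apply_poly) (intro continuous_intros)
  moreover have "locally_uniform_limit (\<lambda>k. cleared_apply D (poly (p k))) (cleared_apply D f)"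
    using poly_holomorphic lim_p by (rule locally_uniform_limit_cleared_apply)
  ultimately have "locally_uniform_limit (\<lambda>k z. poly (op_denom D) z * poly (q k) z) (cleared_apply D f)"
    by simp
  then obtain g where lim_q: "locally_uniform_limit (\<lambda>k. poly (q k)) g"
    and g: "\<And>z. poly (op_denom D) z * g z = cleared_apply D f z"
    using locally_uniform_limit_divide_poly[OF op_denom_nonzero[OF assms(1)] poly_holomorphic] by blast
  have "g holomorphic_on UNIV"
    using poly_holomorphic lim_q by (rule locally_uniform_limit_holomorphic)
  moreover have "poly_approx V g"
    unfolding poly_approx_iff_limit using q lim_q by blast
  ultimately have "g \<in> H_closure V"
    by (simp add: H_closure_iff)
  moreover have "op_apply D f z = g z" if "z \<notin> op_poles D" for z
  proof -
    have "poly (op_denom D) z \<noteq> 0"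
      using that by (simp add: poly_op_denom_eq_0_iff)
    then show ?thesis
      using op_denom_times_op_apply[OF that, of f] g[of z] by (metis mult_left_cancel)
  qed
  ultimately show "\<exists>g\<in>H_closure V. \<forall>z. z \<notin> op_poles D \<longrightarrow> op_apply D f z = g z"
    by blast
qed

lemma op_maps_poly_if_op_maps_closure:
  assumes "in_S V" "valid_op D" "op_maps_closure D U V"
  shows "op_maps_poly D U V"
  unfolding op_maps_poly_def
proof
  fix p assume "p \<in> U"
  then obtain g where "g \<in> H_closure V" and Dp: "\<And>z. z \<notin> op_poles D \<Longrightarrow> op_apply D (poly p) z = g z"
    using assms(3) poly_in_H_closure unfolding op_maps_closure_def by blast
  then have "continuous_on UNIV g"
    by (simp add: H_closure_iff holomorphic_on_imp_continuous_on)
  with assms(2) Dp have "(\<lambda>z. poly (op_denom D) z * g z) = cleared_apply D (poly p)"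
    by (intro op_denom_times_eq_cleared_apply_poly)
  then have "poly (op_denom D) z * g z = poly (\<Sum>i<length D. cleared_coeff D i * (pderiv ^^ i) p) z" for z
    by (simp add: cleared_apply_poly fun_eq_iff)
  then obtain Q where "g = poly Q"
    using continuous_quotient_of_polys_is_poly[OF \<open>continuous_on UNIV g\<close> op_denom_nonzero[OF assms(2)]]
    by blast
  with \<open>g \<in> H_closure V\<close> have "Q \<in> V"
    using poly_in_H_closure_iff[OF assms(1)] by simp
  with Dp \<open>g = poly Q\<close> show "\<exists>q\<in>V. \<forall>z. z \<notin> op_poles D \<longrightarrow> op_apply D (poly p) z = poly q z"
    by blast
qed

theorem lemma2p2:
  fixes U V :: "complex poly set" and D :: "(complex poly \<times> complex poly) list"
  assumes "in_S U" and "in_S V" and "valid_op D"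
  shows "op_maps_poly D U V \<longleftrightarrow> op_maps_closure D U V"
  using op_maps_closure_if_op_maps_poly op_maps_poly_if_op_maps_closure assms(2,3) by blast

end
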